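(* If $\delta$ is a positive real number with $\delta\le\inf_{0<\varepsilon<1}\Delta(\varepsilon)/\varepsilon^2$, then $R(g,n)\le\delta^{-1/2}\sqrt{gn}$ for all integers $n\ge g\ge1$.
   Context: A set $S$ of integers is a $B^*[g]$ set if for every integer $m$ there are at most $g$ ordered pairs $(s_1,s_2)\in S\times S$ with $s_1+s_2=m$. $R(g,n)$ is the maximum cardinality of a $B^*[g]$ set contained in $\{1,2,\dots,n\}$. Let $\lambda$ be Lebesgue measure; a set $C\subseteq\mathbb{R}$ is symmetric if there is $c$ with $c+x\in C\iff c-x\in C$; $D(A):=\sup\{\lambda(C): C\subseteq A \text{ measurable and symmetric}\}$, and $\Delta(\varepsilon):=\inf\{D(A): A\subseteq[0,1) \text{ measurable},\ \lambda(A)=\varepsilon\}$. *)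

theory Defs
  imports "HOL-Analysis.Analysis"
begin

definition Bstar :: "nat \<Rightarrow> int set \<Rightarrow> bool" where
  "Bstar g S \<longleftrightarrow> (\<forall>m::int. card {(s1, s2). s1 \<in> S \<and> s2 \<in> S \<and> s1 + s2 = m} \<le> g)"

definition R :: "nat \<Rightarrow> nat \<Rightarrow> nat" where
  "R g n = Max {card S | S. S \<subseteq> {1..int n} \<and> Bstar g S}"

definition symmetric_set :: "real set \<Rightarrow> bool" where
  "symmetric_set C \<longleftrightarrow> (\<exists>c. \<forall>x. c + x \<in> C \<longleftrightarrow> c - x \<in> C)"

definition D :: "real set \<Rightarrow> real" where
  "D A = Sup {measure lebesgue C | C. C \<subseteq> A \<and> C \<in> sets lebesgue \<and> symmetric_set C}"

definition Delta :: "real \<Rightarrow> real" where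
  "Delta \<epsilon> = Inf {D A | A. A \<subseteq> {0..<1} \<and> A \<in> sets lebesgue \<and> measure lebesgue A = \<epsilon>}"

end

theory Submission
  imports Defs
begin

text \<open>
  Let \<open>S \<subseteq> {1..n}\<close> be a \<open>B\<^sup>*[g]\<close> set with \<open>k\<close> elements and let \<open>A\<close> be the union of the
  cells \<open>[(s-1)/n, s/n)\<close>, \<open>s \<in> S\<close>, a subset of \<open>[0,1)\<close> of measure \<open>k/n\<close>.  A subset of \<open>A\<close>
  symmetric about \<open>c\<close> lies in \<open>A \<inter> (2c - A)\<close>, which is covered by the overlaps of the cell
  of \<open>s\<close> with the mirrored cell of \<open>t\<close>, for \<open>s, t \<in> S\<close>.  Such an overlap has measure
  \<open>max 0 (1 - |s + t - 2cn - 1|) / n\<close>, a tent function of \<open>s + t\<close>; as every sum is realised by at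
  most \<open>g\<close> pairs, the overlaps add up to at most \<open>g/n\<close>.  Hence
  \<open>\<delta> (k/n)\<^sup>2 \<le> \<Delta>(k/n) \<le> D(A) \<le> g/n\<close>, i.e. \<open>\<delta> k\<^sup>2 \<le> gn\<close>.  The case \<open>k = n\<close>, where \<open>k/n = 1\<close> lies outside
  the infimum, forces \<open>g = n\<close> and is covered by \<open>\<delta> \<le> 1\<close>, which follows from \<open>\<Delta>(\<epsilon>) \<le> \<epsilon>\<close>.
\<close>

lemma sum_tent_le_fibre_bound:
  fixes P :: "'a set" and h :: "'a \<Rightarrow> int" and u :: real
  assumes "finite P" and fibre: "\<And>m. card {p\<in>P. h p = m} \<le> g"
  shows "(\<Sum>p\<in>P. max 0 (1 - \<bar>of_int (h p) - u\<bar>)) \<le> g"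
proof -
  define m where "m = \<lfloor>u\<rfloor>"
  define \<theta> where "\<theta> = u - of_int m"
  have m: "of_int m \<le> u" "u < of_int m + 1"
    unfolding m_def by linarith+
  \<comment> \<open>Only the integers \<open>m\<close> and \<open>m + 1\<close> lie closer than 1 to \<open>u\<close>.\<close>
  have tent: "max 0 (1 - \<bar>of_int (h p) - u\<bar>)
      \<le> (if h p = m then 1 - \<theta> else 0) + (if h p = m + 1 then \<theta> else 0)" for p
  proof -
    consider "h p \<le> m - 1" | "h p = m" | "h p = m + 1" | "m + 2 \<le> h p"
      by linarith
    then show ?thesis
    proof cases
      case 1
      then have "of_int (h p) \<le> u - 1"
        using m by linarith
      with 1 show ?thesis by auto
    next
      case 4
      then have "u + 1 \<le> of_int (h p)"
        using m by linarith
      with 4 show ?thesis by auto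
    qed (use m in \<open>auto simp: \<theta>_def\<close>)
  qed
  have "(\<Sum>p\<in>P. max 0 (1 - \<bar>of_int (h p) - u\<bar>))
      \<le> (\<Sum>p\<in>P. (if h p = m then 1 - \<theta> else 0) + (if h p = m + 1 then \<theta> else 0))"
    by (intro sum_mono tent)
  also have "\<dots> = card {p\<in>P. h p = m} * (1 - \<theta>) + card {p\<in>P. h p = m + 1} * \<theta>"
    by (simp add: sum.distrib sum.inter_filter[OF \<open>finite P\<close>, symmetric])
  also have "\<dots> \<le> g * (1 - \<theta>) + g * \<theta>"
    using fibre[of m] fibre[of "m + 1"] m by (intro add_mono mult_right_mono) (auto simp: \<theta>_def)
  finally show ?thesis
    by (simp add: algebra_simps)
qed

lemma measure_lebesgue_Icc_inter_Icc:
  fixes a b h :: real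
  assumes "0 \<le> h"
  shows "measure lebesgue ({a..a + h} \<inter> {b..b + h}) = max 0 (h - \<bar>a - b\<bar>)"
proof (cases "max a b \<le> min (a + h) (b + h)")
  case True
  then show ?thesis
    by (auto simp: max_def min_def abs_if)
next
  case False
  then have "h < \<bar>a - b\<bar>"
    by (auto simp: max_def min_def abs_if split: if_splits)
  with False show ?thesis
    by simp
qed

definition cell_union :: "nat \<Rightarrow> int set \<Rightarrow> real set" where
  "cell_union n S = (\<Union>s\<in>S. {of_int (s - 1) / n ..< of_int s / n})"

lemma mem_cell_iff_floor:
  fixes n :: nat and x :: real
  assumes "0 < n"
  shows "x \<in> {of_int (s - 1) / n ..< of_int s / n} \<longleftrightarrow> \<lfloor>n * x\<rfloor> = s - 1"
  by (subst floor_eq_iff) (use assms in \<open>simp add: field_simps\<close>)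

lemma cell_union_subset_unit_interval:
  assumes "S \<subseteq> {1..int n}"
  shows "cell_union n S \<subseteq> {0..<1}"
proof
  fix x
  assume "x \<in> cell_union n S"
  then obtain s where s: "s \<in> S" "of_int (s - 1) / n \<le> x" "x < of_int s / n"
    unfolding cell_union_def by auto
  with assms have "1 \<le> s" "s \<le> int n"
    by auto
  then have "0 \<le> of_int (s - 1) / n" "of_int s / n \<le> 1"
    by (auto simp: field_simps)
  with s show "x \<in> {0..<1}"
    by auto
qed

lemma cell_union_lebesgue_measurable: "cell_union n S \<in> sets lebesgue"
  unfolding cell_union_def by (intro sets.countable_UN') auto

lemma measure_cell_union:
  assumes "0 < n" and "finite S"
  shows "measure lebesgue (cell_union n S) = card S / n"
proof -
  have "disjoint_family_on (\<lambda>s. {of_int (s - 1) / n ..< of_int s / n}) S"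
    unfolding disjoint_family_on_def disjoint_iff mem_cell_iff_floor[OF assms(1)] by auto
  then have "measure lebesgue (cell_union n S) = (\<Sum>s\<in>S. measure lebesgue {of_int (s - 1) / n ..< of_int s / n})"
    unfolding cell_union_def
    by (intro measure_finite_Union \<open>finite S\<close>) (auto simp: divide_right_mono)
  also have "\<dots> = (\<Sum>s\<in>S. 1 / n)"
    by (intro sum.cong refl) (simp add: divide_right_mono diff_divide_distrib[symmetric])
  finally show ?thesis
    by simp
qed

lemma measure_cell_inter_reflected_cell:
  fixes n :: nat and c :: real
  assumes "0 < n"
  shows "measure lebesgue ({of_int (s - 1) / n .. of_int (s - 1) / n + 1 / n}
      \<inter> {2 * c - of_int t / n .. 2 * c - of_int t / n + 1 / n})
    = max 0 (1 - \<bar>of_int (s + t) - (2 * c * n + 1)\<bar>) / n"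
proof -
  have "measure lebesgue ({of_int (s - 1) / n .. of_int (s - 1) / n + 1 / n}
      \<inter> {2 * c - of_int t / n .. 2 * c - of_int t / n + 1 / n})
    = max 0 (1 / n - \<bar>of_int (s - 1) / n - (2 * c - of_int t / n)\<bar>)"
    by (rule measure_lebesgue_Icc_inter_Icc) simp
  also have "of_int (s - 1) / n - (2 * c - of_int t / n) = (of_int (s + t) - (2 * c * n + 1)) / n"
    using assms by (simp add: field_simps)
  also have "max 0 (1 / n - \<bar>y / n\<bar>) = max 0 (1 - \<bar>y\<bar>) / n" for y :: real
    using assms by (simp add: max_divide_distrib_right diff_divide_distrib)
  finally show ?thesis .
qed

lemma measure_symmetric_subset_cell_union_le:
  assumes "0 < n" and "finite S" and "Bstar g S"
    and "C \<subseteq> cell_union n S" and "C \<in> sets lebesgue" and "symmetric_set C"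
  shows "measure lebesgue C \<le> g / n"
proof -
  obtain c where c: "\<And>x. c + x \<in> C \<longleftrightarrow> c - x \<in> C"
    using \<open>symmetric_set C\<close> unfolding symmetric_set_def by blast
  \<comment> \<open>\<open>K s t\<close> contains the points of the cell of \<open>s\<close> whose mirror image lies in the cell of \<open>t\<close>.\<close>
  define K where "K s t = {of_int (s - 1) / n .. of_int (s - 1) / n + 1 / n}
      \<inter> {2 * c - of_int t / n .. 2 * c - of_int t / n + 1 / n}" for s t :: int
  have K_lmeasurable: "K s t \<in> lmeasurable" for s t
    unfolding K_def by simp
  have cover: "C \<subseteq> (\<Union>(s, t)\<in>S \<times> S. K s t)"
  proof
    fix x
    assume "x \<in> C"
    then have "2 * c - x \<in> C"
      using c[of "x - c"] by simp
    with \<open>x \<in> C\<close> \<open>C \<subseteq> cell_union n S\<close> obtain s t where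
      "s \<in> S" "x \<in> {of_int (s - 1) / n ..< of_int s / n}"
      "t \<in> S" "2 * c - x \<in> {of_int (t - 1) / n ..< of_int t / n}"
      unfolding cell_union_def by blast
    then have "x \<in> K s t"
      using \<open>0 < n\<close> by (auto simp: K_def field_simps)
    with \<open>s \<in> S\<close> \<open>t \<in> S\<close> show "x \<in> (\<Union>(s, t)\<in>S \<times> S. K s t)"
      by blast
  qed
  have overlap: "measure lebesgue (K s t) = max 0 (1 - \<bar>of_int (s + t) - (2 * c * n + 1)\<bar>) / n" for s t
    unfolding K_def using \<open>0 < n\<close> by (rule measure_cell_inter_reflected_cell)
  have "measure lebesgue C \<le> measure lebesgue (\<Union>(s, t)\<in>S \<times> S. K s t)"
    using \<open>finite S\<close> by (intro measure_mono_fmeasurable[OF cover \<open>C \<in> sets lebesgue\<close>])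
      (auto intro: K_lmeasurable)
  also have "\<dots> \<le> (\<Sum>(s, t)\<in>S \<times> S. measure lebesgue (K s t))"
    using \<open>finite S\<close> measure_UNION_le[of "S \<times> S" "\<lambda>(s, t). K s t" lebesgue]
    by (simp add: split_def fmeasurableD[OF K_lmeasurable])
  also have "\<dots> = (\<Sum>p\<in>S \<times> S. max 0 (1 - \<bar>of_int (fst p + snd p) - (2 * c * n + 1)\<bar>)) / n"
    by (simp add: overlap sum_divide_distrib case_prod_beta)
  also have "\<dots> \<le> g / n"
  proof (intro divide_right_mono sum_tent_le_fibre_bound)
    fix m
    have "card {(s1, s2). s1 \<in> S \<and> s2 \<in> S \<and> s1 + s2 = m} \<le> g"
      using \<open>Bstar g S\<close> unfolding Bstar_def by blast
    moreover have "{p\<in>S \<times> S. fst p + snd p = m} = {(s1, s2). s1 \<in> S \<and> s2 \<in> S \<and> s1 + s2 = m}"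
      by auto
    ultimately show "card {p\<in>S \<times> S. fst p + snd p = m} \<le> g"
      by simp
  qed (use \<open>finite S\<close> in auto)
  finally show ?thesis .
qed

lemma D_leI:
  assumes "\<And>C. C \<subseteq> A \<Longrightarrow> C \<in> sets lebesgue \<Longrightarrow> symmetric_set C \<Longrightarrow> measure lebesgue C \<le> b"
  shows "D A \<le> b"
proof -
  have "symmetric_set {}"
    by (simp add: symmetric_set_def)
  then show ?thesis
    unfolding D_def by (intro cSup_least) (use assms in auto)
qed

lemma D_le_measure:
  assumes "A \<in> lmeasurable"
  shows "D A \<le> measure lebesgue A"
  by (intro D_leI measure_mono_fmeasurable assms)

lemma D_nonneg:
  assumes "A \<in> lmeasurable"
  shows "0 \<le> D A"
proof -
  have "0 \<in> {measure lebesgue C | C. C \<subseteq> A \<and> C \<in> sets lebesgue \<and> symmetric_set C}"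
    by (auto simp: symmetric_set_def intro!: exI[of _ "{}"])
  moreover have "bdd_above {measure lebesgue C | C. C \<subseteq> A \<and> C \<in> sets lebesgue \<and> symmetric_set C}"
    using assms by (auto intro!: bdd_aboveI[of _ "measure lebesgue A"] measure_mono_fmeasurable)
  ultimately show ?thesis
    unfolding D_def by (rule cSup_upper)
qed

lemma lmeasurable_if_subset_unit_interval:
  fixes A :: "real set"
  assumes "A \<subseteq> {0..<1}" and "A \<in> sets lebesgue"
  shows "A \<in> lmeasurable"
  using bounded_subset[OF bounded_Ico assms(1)] assms(2) by (rule bounded_set_imp_lmeasurable)

lemma Delta_le_D:
  assumes "A \<subseteq> {0..<1}" and "A \<in> sets lebesgue" and "measure lebesgue A = e"
  shows "Delta e \<le> D A"
proof -
  have "bdd_below {D A | A. A \<subseteq> {0..<1} \<and> A \<in> sets lebesgue \<and> measure lebesgue A = e}"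
    by (rule bdd_belowI[of _ 0]) (blast intro: D_nonneg lmeasurable_if_subset_unit_interval)
  then show ?thesis
    unfolding Delta_def by (rule cInf_lower[rotated]) (use assms in blast)
qed

lemma Delta_nonneg:
  assumes "0 \<le> e" and "e \<le> 1"
  shows "0 \<le> Delta e"
proof -
  have "{0..<e} \<subseteq> {0..<1} \<and> {0..<e} \<in> sets lebesgue \<and> measure lebesgue {0..<e} = e"
    using assms by auto
  then show ?thesis
    unfolding Delta_def
    by (intro cInf_greatest) (blast, blast intro: D_nonneg lmeasurable_if_subset_unit_interval)
qed

lemma Delta_le:
  assumes "0 \<le> e" and "e \<le> 1"
  shows "Delta e \<le> e"
proof -
  have "Delta e \<le> D {0..<e}"
    using assms by (intro Delta_le_D) auto
  also have "\<dots> \<le> measure lebesgue {0..<e}"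
    by (intro D_le_measure lmeasurable_if_subset_unit_interval) (use assms in auto)
  finally show ?thesis
    using assms by simp
qed

lemma Delta_cell_union_le:
  assumes "0 < n" and "S \<subseteq> {1..int n}" and "Bstar g S"
  shows "Delta (card S / n) \<le> g / n"
proof -
  have "finite S"
    using assms(2) finite_subset by blast
  have "Delta (card S / n) \<le> D (cell_union n S)"
    using assms \<open>finite S\<close>
    by (intro Delta_le_D cell_union_subset_unit_interval cell_union_lebesgue_measurable measure_cell_union)
  also have "\<dots> \<le> g / n"
    using assms \<open>finite S\<close> by (intro D_leI measure_symmetric_subset_cell_union_le)
  finally show ?thesis .
qed

lemma le_one_if_le_Delta_ratio:
  assumes ratio: "\<And>e. 0 < e \<Longrightarrow> e < 1 \<Longrightarrow> \<delta> \<le> Delta e / e\<^sup>2"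
  shows "\<delta> \<le> 1"
proof (rule ccontr)
  assume "\<not> \<delta> \<le> 1"
  define e where "e = (1 + 1 / \<delta>) / 2"
  have e: "0 < e" "e < 1" "1 / \<delta> < e"
    using \<open>\<not> \<delta> \<le> 1\<close> by (auto simp: e_def field_simps)
  have "\<delta> \<le> Delta e / e\<^sup>2"
    using e by (intro ratio)
  also have "\<dots> \<le> e / e\<^sup>2"
    using e by (intro divide_right_mono Delta_le) auto
  also have "\<dots> = 1 / e"
    by (simp add: power2_eq_square)
  also have "\<dots> < \<delta>"
    using e \<open>\<not> \<delta> \<le> 1\<close> by (auto simp: field_simps)
  finally show False
    by simp
qed

lemma Bstar_atLeastAtMost_le:
  assumes "Bstar g {1..int n}"
  shows "n \<le> g"
proof -
  let ?P = "{(s1, s2). s1 \<in> {1..int n} \<and> s2 \<in> {1..int n} \<and> s1 + s2 = int n + 1}"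
  have "?P = (\<lambda>s. (s, int n + 1 - s)) ` {1..int n}"
    by auto
  then have "card ?P = n"
    by (simp add: card_image inj_on_def)
  moreover have "card ?P \<le> g"
    using assms unfolding Bstar_def by blast
  ultimately show ?thesis
    by simp
qed

lemma Bstar_card_squared_le:
  assumes ratio: "\<And>e. 0 < e \<Longrightarrow> e < 1 \<Longrightarrow> \<delta> \<le> Delta e / e\<^sup>2"
    and "g \<le> n" and S: "S \<subseteq> {1..int n}" and "Bstar g S"
  shows "\<delta> * (card S)\<^sup>2 \<le> g * n"
proof -
  have "card S \<le> n"
    using card_mono[OF _ S] by simp
  consider "card S = 0" | "card S = n" | "0 < card S" "card S < n"
    using \<open>card S \<le> n\<close> by linarith
  then show ?thesis
  proof cases
    case 1
    then show ?thesis by simp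
  next
    case 2
    then have "S = {1..int n}"
      using card_subset_eq[OF _ S] by simp
    with \<open>Bstar g S\<close> \<open>g \<le> n\<close> have "g = n"
      using Bstar_atLeastAtMost_le by fastforce
    moreover have "\<delta> \<le> 1"
      using ratio by (rule le_one_if_le_Delta_ratio)
    ultimately show ?thesis
      using 2 mult_right_mono[of \<delta> 1 "real n * real n"] by (simp add: power2_eq_square)
  next
    case 3
    define e where "e = card S / n"
    have "0 < e" "e < 1"
      using 3 by (auto simp: e_def)
    then have "\<delta> \<le> Delta e / e\<^sup>2"
      by (rule ratio)
    also have "\<dots> \<le> (g / n) / e\<^sup>2"
      unfolding e_def using 3 assms by (intro divide_right_mono Delta_cell_union_le) auto
    also have "\<dots> = g * n / (card S)\<^sup>2"
      using 3 by (simp add: e_def field_simps power2_eq_square)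
    finally show ?thesis
      using 3 by (simp add: field_simps)
  qed
qed

lemma R_attained: "\<exists>S. S \<subseteq> {1..int n} \<and> Bstar g S \<and> card S = R g n"
proof -
  let ?F = "{card S | S. S \<subseteq> {1..int n} \<and> Bstar g S}"
  have "finite ?F"
    by (rule finite_subset[of _ "card ` Pow {1..int n}"]) auto
  moreover have "Bstar g {}"
    by (simp add: Bstar_def)
  then have "card ({} :: int set) \<in> ?F"
    by blast
  ultimately have "R g n \<in> ?F"
    unfolding R_def by (intro Max_in) auto
  then show ?thesis
    by auto
qed

theorem corollary3p2:
  fixes \<delta> :: real and g n :: nat
  assumes "\<delta> > 0"
    and "\<delta> \<le> Inf {Delta \<epsilon> / \<epsilon>^2 | \<epsilon>. 0 < \<epsilon> \<and> \<epsilon> < 1}"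
    and "1 \<le> g" and "g \<le> n"
  shows "real (R g n) \<le> \<delta> powr (-1/2) * sqrt (real g * real n)"
proof -
  have ratio: "\<delta> \<le> Delta e / e\<^sup>2" if "0 < e" "e < 1" for e
  proof -
    have "bdd_below {Delta \<epsilon> / \<epsilon>^2 | \<epsilon>. 0 < \<epsilon> \<and> \<epsilon> < 1}"
      by (rule bdd_belowI[of _ 0]) (auto intro!: divide_nonneg_nonneg Delta_nonneg)
    then have "Inf {Delta \<epsilon> / \<epsilon>^2 | \<epsilon>. 0 < \<epsilon> \<and> \<epsilon> < 1} \<le> Delta e / e\<^sup>2"
      by (rule cInf_lower[rotated]) (use that in blast)
    with assms(2) show ?thesis
      by linarith
  qed
  obtain S where S: "S \<subseteq> {1..int n}" "Bstar g S" and card_S: "card S = R g n"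
    using R_attained by blast
  have "\<delta> * (R g n)\<^sup>2 \<le> g * n"
    using Bstar_card_squared_le[OF ratio \<open>g \<le> n\<close> S] unfolding card_S .
  then have "R g n * sqrt \<delta> \<le> sqrt (g * n)"
    using real_sqrt_le_mono by (fastforce simp: real_sqrt_mult mult.commute)
  then show ?thesis
    using assms(1) by (simp add: powr_minus_divide powr_half_sqrt field_simps)
qed

end
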